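(* Let $X$ be a finite set, $t_1<\dots<t_M$ real numbers and $(\mathcal{P}^{t_m})_{m\le M}$ partitions of $X$ with Multiscale Clustering Filtration $(K^{t_m})_{m\le M}$, and let $K:=K^{t_M}$. For every integer $1\le k\le\dim(K)-1$: (i) $c_k(t_1)=b_k(t_1)$ and $c_k(t_m)=\beta_k^{t_m}-\beta_k^{t_{m-1}}$ for $2\le m\le M$; (ii) $\beta_k^{t_m}=\sum_{l=1}^m c_k(t_l)$ for all $1\le m\le M$.
   Context: A partition of $X$ is a collection of non-empty pairwise disjoint subsets (clusters) whose union is $X$. For a finite non-empty set $C$, $\Delta C$ is the set of all non-empty subsets of $C$. The MCF is $K^{t_m}:=\bigcup_{l\le m}\bigcup_{C\in\mathcal{P}^{t_l}}\Delta C$ for $1\le m\le M$, with $K^{t_0}:=\emptyset$. $\dim(K)$ is the maximal dimension of a simplex in $K$. Homology is simplicial homology over $\mathbb{Z}_2$; $\beta_k^{t_m}$ is the dimension of $H_k(K^{t_m})$. For $0\le i\le j\le M$ let $\beta_k^{i,j}$ be the rank of the map $H_k(K^{t_i})\to H_k(K^{t_j})$ induced by inclusion. For $1\le i<j\le M$, $\mu_k^{t_i,t_j}:=\beta_k^{i,j-1}-\beta_k^{i,j}-\beta_k^{i-1,j-1}+\beta_k^{i-1,j}$ is the number of independent $k$-dimensional classes born at index $i$ and dying at index $j$, and $\mu_k^{t_i,\infty}:=\beta_k^{i,M}-\beta_k^{i-1,M}$ is the number born at index $i$ that never die. Define $b_k(t_m):=\sum_{l=m+1}^M\mu_k^{t_m,t_l}+\mu_k^{t_m,\infty}$,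 $d_k(t_m):=\sum_{l=1}^{m-1}\mu_k^{t_l,t_m}$, and the persistent conflict $c_k(t_m):=b_k(t_m)-d_k(t_m)$. *)

theory Defs
  imports Complex_Main "HOL-Library.Z2" "HOL-Library.Function_Algebras" "HOL-Library.Disjoint_Sets"
begin

definition Delta :: "'a set \<Rightarrow> 'a set set" where
  "Delta C = {S. S \<subseteq> C \<and> S \<noteq> {}}"

definition MCF :: "(nat \<Rightarrow> 'a set set) \<Rightarrow> nat \<Rightarrow> 'a set set" where
  "MCF P m = (\<Union>l\<in>{1..m}. \<Union>C\<in>P l. Delta C)"

text \<open>Dimension of a (finite) simplicial complex (0 for the empty complex; this
  only matters for the vacuous range of k).\<close>
definition cdim :: "'a set set \<Rightarrow> nat" where
  "cdim K = Max (insert 0 ((\<lambda>\<sigma>. card \<sigma> - 1) ` K))"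

type_synonym 'a chain = "'a set \<Rightarrow> bit"

definition cscale :: "bit \<Rightarrow> 'a chain \<Rightarrow> 'a chain" where
  "cscale a c = (\<lambda>\<sigma>. a * c \<sigma>)"

text \<open>k-chains of K: supported on k-simplices of K (k-simplex = card k+1).\<close>
definition chains :: "'a set set \<Rightarrow> nat \<Rightarrow> 'a chain set" where
  "chains K k = {c. \<forall>\<sigma>. c \<sigma> \<noteq> 0 \<longrightarrow> \<sigma> \<in> K \<and> card \<sigma> = Suc k}"

text \<open>Simplicial boundary over Z_2 (non-reduced: vertices have boundary 0).\<close>
definition bd :: "'a set set \<Rightarrow> 'a chain \<Rightarrow> 'a chain" where
  "bd K c = (\<lambda>\<tau>. if \<tau> = {} then 0
      else (\<Sum>\<sigma>\<in>{\<sigma>\<in>K. \<tau> \<subseteq> \<sigma> \<and> card \<sigma> = Suc (card \<tau>)}. c \<sigma>))"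

definition cycles :: "'a set set \<Rightarrow> nat \<Rightarrow> 'a chain set" where
  "cycles K k = {c \<in> chains K k. bd K c = 0}"

definition boundaries :: "'a set set \<Rightarrow> nat \<Rightarrow> 'a chain set" where
  "boundaries K k = bd K ` chains K (Suc k)"

definition zdim :: "'a chain set \<Rightarrow> nat" where
  "zdim V = vector_space.dim (cscale :: bit \<Rightarrow> 'a chain \<Rightarrow> 'a chain) V"

text \<open>Rank of H_k(K) \<rightarrow> H_k(L) induced by inclusion K \<subseteq> L:
  its image is (Z_k(K) + B_k(L)) / B_k(L).\<close>
definition hrank :: "'a set set \<Rightarrow> 'a set set \<Rightarrow> nat \<Rightarrow> nat" where
  "hrank K L k = zdim (cycles K k \<union> boundaries L k) - zdim (boundaries L k)"

definition betti :: "'a set set \<Rightarrow> nat \<Rightarrow> nat" where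
  "betti K k = zdim (cycles K k) - zdim (boundaries K k)"

definition pbetti :: "(nat \<Rightarrow> 'a set set) \<Rightarrow> nat \<Rightarrow> nat \<Rightarrow> nat \<Rightarrow> int" where
  "pbetti P k i j = int (hrank (MCF P i) (MCF P j) k)"

definition mu :: "(nat \<Rightarrow> 'a set set) \<Rightarrow> nat \<Rightarrow> nat \<Rightarrow> nat \<Rightarrow> int" where
  "mu P k i j = pbetti P k i (j - 1) - pbetti P k i j - pbetti P k (i - 1) (j - 1)
               + pbetti P k (i - 1) j"

definition mu_inf :: "(nat \<Rightarrow> 'a set set) \<Rightarrow> nat \<Rightarrow> nat \<Rightarrow> nat \<Rightarrow> int" where
  "mu_inf P M k i = pbetti P k i M - pbetti P k (i - 1) M"

definition births :: "(nat \<Rightarrow> 'a set set) \<Rightarrow> nat \<Rightarrow> nat \<Rightarrow> nat \<Rightarrow> int" where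
  "births P M k m = (\<Sum>l=m+1..M. mu P k m l) + mu_inf P M k m"

definition deaths :: "(nat \<Rightarrow> 'a set set) \<Rightarrow> nat \<Rightarrow> nat \<Rightarrow> int" where
  "deaths P k m = (\<Sum>l=1..m-1. mu P k l m)"

definition conflict :: "(nat \<Rightarrow> 'a set set) \<Rightarrow> nat \<Rightarrow> nat \<Rightarrow> nat \<Rightarrow> int" where
  "conflict P M k m = births P M k m - deaths P k m"

end

theory Submission
  imports Defs
begin

text \<open>Write \<open>\<beta>(i,j)\<close> for \<open>\<beta>\<^sub>k\<^sup>i\<^sup>,\<^sup>j\<close>. Each \<open>\<mu>(i,j)\<close> is a mixed second difference
  of \<open>\<beta>\<close>, so the births at index \<open>m\<close> telescope over the death index to
  \<open>\<beta>(m,m) - \<beta>(m-1,m)\<close>, and the deaths at \<open>m\<close> telescope over the birth index to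
  \<open>\<beta>(m-1,m-1) - \<beta>(m-1,m) - \<beta>(0,m-1) + \<beta>(0,m)\<close>. The complex at index 0 is empty, so
  \<open>\<beta>(0,j) = 0\<close>, and boundaries are cycles, so \<open>\<beta>(m,m)\<close> is the Betti number of the
  \<open>m\<close>-th complex. Hence \<open>c\<^sub>k(t\<^sub>m)\<close> is the increment of the Betti numbers and (ii) telescopes.
  Boundaries are cycles because in a complex closed under faces a simplex and a face of
  codimension two are joined by exactly two intermediate faces, so \<open>\<partial>\<partial> = 0\<close> over \<open>\<int>\<^sub>2\<close>.\<close>

lemma vector_space_cscale: "vector_space (cscale :: bit \<Rightarrow> 'a chain \<Rightarrow> 'a chain)"
  by unfold_locales (auto simp: cscale_def fun_eq_iff algebra_simps)

definition face_closed :: "'a set set \<Rightarrow> bool" where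
  "face_closed K \<longleftrightarrow> (\<forall>\<sigma>\<in>K. \<forall>\<tau>. \<tau> \<subseteq> \<sigma> \<and> \<tau> \<noteq> {} \<longrightarrow> \<tau> \<in> K)"

definition cofaces :: "'a set set \<Rightarrow> 'a set \<Rightarrow> 'a set set" where
  "cofaces K \<tau> = {\<sigma>\<in>K. \<tau> \<subseteq> \<sigma> \<and> card \<sigma> = Suc (card \<tau>)}"

lemma bd_eq_sum_cofaces: "\<tau> \<noteq> {} \<Longrightarrow> bd K c \<tau> = (\<Sum>\<sigma>\<in>cofaces K \<tau>. c \<sigma>)"
  by (simp add: bd_def cofaces_def)

lemma sets_between_codim2_eq:
  assumes "finite \<rho>" "\<tau> \<subseteq> \<rho>"
  shows "{\<sigma>. \<tau> \<subseteq> \<sigma> \<and> \<sigma> \<subseteq> \<rho> \<and> card \<sigma> = Suc (card \<tau>)} = (\<lambda>x. insert x \<tau>) ` (\<rho> - \<tau>)"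
proof (intro set_eqI iffI)
  fix \<sigma> assume \<sigma>: "\<sigma> \<in> {\<sigma>. \<tau> \<subseteq> \<sigma> \<and> \<sigma> \<subseteq> \<rho> \<and> card \<sigma> = Suc (card \<tau>)}"
  moreover have "finite \<sigma>" "finite \<tau>"
    using \<sigma> assms finite_subset by auto
  ultimately have "card (\<sigma> - \<tau>) = 1"
    by (simp add: card_Diff_subset)
  then obtain x where x: "\<sigma> - \<tau> = {x}"
    by (meson card_1_singletonE)
  with \<sigma> have "\<sigma> = insert x \<tau>" "x \<in> \<rho> - \<tau>"
    by auto
  then show "\<sigma> \<in> (\<lambda>x. insert x \<tau>) ` (\<rho> - \<tau>)"
    by blast
next
  fix \<sigma> assume "\<sigma> \<in> (\<lambda>x. insert x \<tau>) ` (\<rho> - \<tau>)"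
  then show "\<sigma> \<in> {\<sigma>. \<tau> \<subseteq> \<sigma> \<and> \<sigma> \<subseteq> \<rho> \<and> card \<sigma> = Suc (card \<tau>)}"
    using assms finite_subset[OF assms(2,1)] by auto
qed

lemma card_sets_between_codim2:
  assumes "finite \<rho>" "\<tau> \<subseteq> \<rho>" "card \<rho> = Suc (Suc (card \<tau>))"
  shows "card {\<sigma>. \<tau> \<subseteq> \<sigma> \<and> \<sigma> \<subseteq> \<rho> \<and> card \<sigma> = Suc (card \<tau>)} = 2"
proof -
  have "inj_on (\<lambda>x. insert x \<tau>) (\<rho> - \<tau>)"
    by (rule inj_onI) blast
  then have "card ((\<lambda>x. insert x \<tau>) ` (\<rho> - \<tau>)) = card (\<rho> - \<tau>)"
    by (rule card_image)
  also have "\<dots> = 2"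
    using assms finite_subset[OF assms(2)] by (simp add: card_Diff_subset)
  finally show ?thesis
    using sets_between_codim2_eq[OF assms(1,2)] by simp
qed

lemma even_card_cofaces_between:
  assumes "face_closed K" "\<rho> \<in> K"
  shows "even (card {\<sigma>\<in>cofaces K \<tau>. \<rho> \<in> cofaces K \<sigma>})"
proof (cases "\<tau> \<subseteq> \<rho> \<and> card \<rho> = Suc (Suc (card \<tau>))")
  case True
  then have "finite \<rho>"
    using card.infinite by fastforce
  have "{\<sigma>\<in>cofaces K \<tau>. \<rho> \<in> cofaces K \<sigma>} = {\<sigma>. \<tau> \<subseteq> \<sigma> \<and> \<sigma> \<subseteq> \<rho> \<and> card \<sigma> = Suc (card \<tau>)}"
    using assms True unfolding cofaces_def face_closed_def by force
  then show ?thesis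
    using card_sets_between_codim2[OF \<open>finite \<rho>\<close>] True by simp
next
  case False
  then have "{\<sigma>\<in>cofaces K \<tau>. \<rho> \<in> cofaces K \<sigma>} = {}"
    unfolding cofaces_def by auto
  then show ?thesis
    by (simp only: card.empty even_zero)
qed

lemma bd_bd:
  assumes "finite K" "face_closed K"
  shows "bd K (bd K c) = 0"
proof
  fix \<tau> :: "'a set"
  show "bd K (bd K c) \<tau> = 0 \<tau>"
  proof (cases "\<tau> = {}")
    case True
    then show ?thesis
      by (simp add: bd_def)
  next
    case False
    have "bd K (bd K c) \<tau> = (\<Sum>\<sigma>\<in>cofaces K \<tau>. bd K c \<sigma>)"
      using False by (rule bd_eq_sum_cofaces)
    also have "\<dots> = (\<Sum>\<sigma>\<in>cofaces K \<tau>. \<Sum>\<rho>\<in>cofaces K \<sigma>. c \<rho>)"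
      using False by (intro sum.cong refl bd_eq_sum_cofaces) (auto simp: cofaces_def)
    also have "\<dots> = (\<Sum>\<sigma>\<in>cofaces K \<tau>. \<Sum>\<rho>\<in>{\<rho>\<in>K. \<rho> \<in> cofaces K \<sigma>}. c \<rho>)"
      by (intro sum.cong refl) (auto simp: cofaces_def)
    also have "\<dots> = (\<Sum>\<rho>\<in>K. \<Sum>\<sigma>\<in>{\<sigma>\<in>cofaces K \<tau>. \<rho> \<in> cofaces K \<sigma>}. c \<rho>)"
      by (rule sum.swap_restrict) (use assms(1) in \<open>auto simp: cofaces_def\<close>)
    also have "\<dots> = (\<Sum>\<rho>\<in>K. of_nat (card {\<sigma>\<in>cofaces K \<tau>. \<rho> \<in> cofaces K \<sigma>}) * c \<rho>)"
      by simp
    also have "\<dots> = 0"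
    proof (intro sum.neutral ballI)
      fix \<rho> assume "\<rho> \<in> K"
      then obtain q where "card {\<sigma>\<in>cofaces K \<tau>. \<rho> \<in> cofaces K \<sigma>} = 2 * q"
        using even_card_cofaces_between[OF assms(2)] by (meson evenE)
      then show "of_nat (card {\<sigma>\<in>cofaces K \<tau>. \<rho> \<in> cofaces K \<sigma>}) * c \<rho> = 0"
        by simp
    qed
    finally show ?thesis
      by simp
  qed
qed

lemma bd_in_chains:
  assumes "face_closed K" "c \<in> chains K (Suc k)"
  shows "bd K c \<in> chains K k"
  unfolding chains_def
proof (intro CollectI allI impI)
  fix \<tau> assume nz: "bd K c \<tau> \<noteq> 0"
  then have "\<tau> \<noteq> {}"
    by (auto simp: bd_def)
  with nz obtain \<sigma> where \<sigma>: "\<sigma> \<in> cofaces K \<tau>" "c \<sigma> \<noteq> 0"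
    by (metis bd_eq_sum_cofaces sum.neutral)
  then have "card \<sigma> = Suc (Suc k)"
    using assms(2) unfolding chains_def by blast
  with \<sigma> \<open>\<tau> \<noteq> {}\<close> assms(1) show "\<tau> \<in> K \<and> card \<tau> = Suc k"
    unfolding cofaces_def face_closed_def by auto
qed

lemma boundaries_subset_cycles:
  assumes "finite K" "face_closed K"
  shows "boundaries K k \<subseteq> cycles K k"
  using bd_bd[OF assms] bd_in_chains[OF assms(2)]
  unfolding boundaries_def cycles_def by auto

lemma hrank_refl:
  assumes "finite K" "face_closed K"
  shows "hrank K K k = betti K k"
  using boundaries_subset_cycles[OF assms, of k]
  unfolding hrank_def betti_def by (simp add: Un_absorb2)

lemma hrank_empty: "hrank {} L k = 0"
proof -
  interpret V: vector_space "cscale :: bit \<Rightarrow> 'a chain \<Rightarrow> 'a chain"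
    by (rule vector_space_cscale)
  have "chains {} k = ({0} :: 'a chain set)"
    unfolding chains_def by (auto simp: fun_eq_iff)
  moreover have "bd {} (0 :: 'a chain) = 0"
    by (simp add: bd_def fun_eq_iff)
  ultimately have "cycles {} k \<union> boundaries L k = insert 0 (boundaries L k)"
    unfolding cycles_def by auto
  moreover have "V.dim (insert 0 (boundaries L k)) = V.dim (boundaries L k)"
    by (metis V.dim_span V.span_insert_0)
  ultimately show ?thesis
    unfolding hrank_def zdim_def by simp
qed

lemma betti_empty: "betti {} k = 0"
  using hrank_refl[of "{} :: 'a set set" k] hrank_empty[of "{} :: 'a set set" k]
  by (simp add: face_closed_def)

lemma MCF_0 [simp]: "MCF P 0 = {}"
  by (simp add: MCF_def)

lemma face_closed_MCF: "face_closed (MCF P m)"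
  unfolding face_closed_def MCF_def Delta_def by blast

lemma finite_MCF:
  assumes "finite X" "\<And>l. 1 \<le> l \<Longrightarrow> l \<le> m \<Longrightarrow> partition_on X (P l)"
  shows "finite (MCF P m)"
proof (rule finite_subset[of _ "Pow X"])
  show "MCF P m \<subseteq> Pow X"
    using assms(2) unfolding MCF_def Delta_def partition_on_def by fastforce
qed (use assms(1) in simp)

lemma pbetti_0_left: "pbetti P k 0 j = 0"
  by (simp add: pbetti_def hrank_empty)

lemma births_eq_pbetti:
  assumes "m \<le> M"
  shows "births P M k m = pbetti P k m m - pbetti P k (m - 1) m"
proof -
  define g where "g l = pbetti P k m l - pbetti P k (m - 1) l" for l
  have "(\<Sum>l=m+1..M. mu P k m l) = (\<Sum>l=Suc m..M. g (l - 1) - g l)"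
    by (simp add: mu_def g_def algebra_simps)
  also have "\<dots> = - (\<Sum>l=Suc m..M. g l - g (l - 1))"
    by (simp flip: sum_negf)
  also have "\<dots> = g m - g M"
    using sum_telescope''[OF assms, of g] by simp
  finally show ?thesis
    by (simp add: births_def mu_inf_def g_def)
qed

lemma deaths_eq_pbetti:
  "deaths P k m = pbetti P k (m - 1) (m - 1) - pbetti P k (m - 1) m
                - pbetti P k 0 (m - 1) + pbetti P k 0 m"
proof -
  define h where "h l = pbetti P k l (m - 1) - pbetti P k l m" for l
  have "mu P k l m = h l - h (l - 1)" for l
    by (simp add: mu_def h_def)
  then have "deaths P k m = (\<Sum>l=Suc 0..m - 1. h l - h (l - 1))"
    by (simp add: deaths_def)
  also have "\<dots> = h (m - 1) - h 0"
    by (rule sum_telescope'') simp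
  finally show ?thesis
    by (simp add: h_def)
qed

lemma conflict_eq_pbetti:
  assumes "m \<le> M"
  shows "conflict P M k m = pbetti P k m m - pbetti P k (m - 1) (m - 1)
                            + pbetti P k 0 (m - 1) - pbetti P k 0 m"
  by (simp add: conflict_def births_eq_pbetti[OF assms] deaths_eq_pbetti)

lemma conflict_MCF_eq_betti_diff:
  assumes "finite X" "\<And>l. 1 \<le> l \<Longrightarrow> l \<le> M \<Longrightarrow> partition_on X (P l)" "m \<le> M"
  shows "conflict P M k m = int (betti (MCF P m) k) - int (betti (MCF P (m - 1)) k)"
proof -
  have "pbetti P k i i = int (betti (MCF P i) k)" if "i \<le> M" for i
  proof -
    have "finite (MCF P i)"
      by (rule finite_MCF[OF assms(1)]) (use assms(2) that in auto)
    then show ?thesis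
      by (simp add: pbetti_def hrank_refl face_closed_MCF)
  qed
  with assms(3) show ?thesis
    by (simp add: conflict_eq_pbetti pbetti_0_left)
qed

theorem proposition5:
  fixes X :: "'a set" and M :: nat and t :: "nat \<Rightarrow> real"
    and P :: "nat \<Rightarrow> 'a set set" and k :: nat
  assumes "finite X"
    and "\<And>i j. 1 \<le> i \<Longrightarrow> i < j \<Longrightarrow> j \<le> M \<Longrightarrow> t i < t j"
    and "\<And>m. 1 \<le> m \<Longrightarrow> m \<le> M \<Longrightarrow> partition_on X (P m)"
    and "1 \<le> k" and "k \<le> cdim (MCF P M) - 1"
  shows "conflict P M k 1 = births P M k 1
       \<and> (\<forall>m\<in>{2..M}. conflict P M k m = int (betti (MCF P m) k) - int (betti (MCF P (m - 1)) k))
       \<and> (\<forall>m\<in>{1..M}. int (betti (MCF P m) k) = (\<Sum>l=1..m. conflict P M k l))"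
proof -
  note conflict_eq = conflict_MCF_eq_betti_diff[OF assms(1,3)]
  have "int (betti (MCF P m) k) = (\<Sum>l=1..m. conflict P M k l)" if "m \<le> M" for m
  proof -
    have "(\<Sum>l=Suc 0..m. conflict P M k l)
        = (\<Sum>l=Suc 0..m. int (betti (MCF P l) k) - int (betti (MCF P (l - 1)) k))"
      using that by (intro sum.cong) (auto simp: conflict_eq)
    also have "\<dots> = int (betti (MCF P m) k)"
      by (subst sum_telescope'') (simp_all add: betti_empty)
    finally show ?thesis
      by simp
  qed
  moreover have "conflict P M k 1 = births P M k 1"
    by (simp add: conflict_def deaths_def)
  ultimately show ?thesis
    by (auto simp: conflict_eq)
qed

end
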